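(* Let $q$ be an odd prime power, $s \ge 2$, and let $E,F\subset\mathbb{F}_q^s$ satisfy $(\#E)(\#F) \ge 900q^s$. Then \[ \nu(0) \le \frac{21}{30} (\# E) (\# F). \]
   Context: $\mathbb{F}_q$ is the finite field with $q$ elements, $q$ odd. For $\mathbf{x}\in\mathbb{F}_q^s$, $|\mathbf{x}|^2=\sum_i x_i^2$. $\nu(0)=\#\{(\mathbf{x},\mathbf{y})\in E\times F: |\mathbf{x}-\mathbf{y}|^2=0\}$. *)

theory Defs
  imports "HOL-Analysis.Analysis"
begin

text \<open>Vectors in F_q^s are modelled as 'a ^ 'n, with 'a a finite field and CARD('n) = s.\<close>

definition sqnorm :: "'a::field ^ 'n \<Rightarrow> 'a" where
  "sqnorm x = (\<Sum>i\<in>UNIV. (x $ i)^2)"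

definition nu :: "('a::field ^ 'n) set \<Rightarrow> ('a ^ 'n) set \<Rightarrow> 'a \<Rightarrow> nat" where
  "nu E F t = card {(x, y). x \<in> E \<and> y \<in> F \<and> sqnorm (x - y) = t}"

end

theory Submission
  imports Defs "HOL-Number_Theory.Residues"
begin

text \<open>Let \<open>n(x, t) = #{y \<in> F. |x - y|\<^sup>2 = t}\<close>, so that \<open>\<nu>(t) = \<Sum>\<^sub>x\<^sub>\<in>\<^sub>E n(x, t)\<close> and
  \<open>\<Sum>\<^sub>t n(x, t) = |F|\<close>. For \<open>y \<noteq> y'\<close> the points equidistant from \<open>y\<close> and \<open>y'\<close> form an affine
  hyperplane (as \<open>2 \<noteq> 0\<close> for odd \<open>q\<close>), hence \<open>\<Sum>\<^sub>x \<Sum>\<^sub>t n(x, t)\<^sup>2 \<le> |F|\<^sup>2 q\<^sup>s / q + |F| q\<^sup>s\<close>,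
  i.e. \<open>\<Sum>\<^sub>x \<Sum>\<^sub>t (n(x, t) - |F|/q)\<^sup>2 \<le> |F| q\<^sup>s\<close>. Cauchy-Schwarz over \<open>x \<in> E\<close> then gives
  \<open>(\<nu>(t) - |E||F|/q)\<^sup>2 \<le> |E||F| q\<^sup>s\<close>, which is at most \<open>(|E||F|/30)\<^sup>2\<close> under the hypothesis, while
  \<open>|E||F|/q \<le> |E||F|/3\<close> because \<open>q \<ge> 3\<close>.\<close>

definition dotp :: "'a::field ^ 'n \<Rightarrow> 'a ^ 'n \<Rightarrow> 'a" where
  "dotp x y = (\<Sum>i\<in>UNIV. x $ i * y $ i)"

lemma sqnorm_diff: "sqnorm (x - y) = sqnorm x - 2 * dotp x y + sqnorm (y :: 'a::field ^ 'n)"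
  unfolding sqnorm_def dotp_def
  by (simp add: power2_eq_square algebra_simps sum.distrib sum_subtractf sum_distrib_left)

lemma dotp_add_left: "dotp (x + y) z = dotp x z + dotp (y :: 'a::field ^ 'n) z"
  unfolding dotp_def by (simp add: algebra_simps sum.distrib)

lemma dotp_add_right: "dotp x (y + z) = dotp x y + dotp (x :: 'a::field ^ 'n) z"
  unfolding dotp_def by (simp add: algebra_simps sum.distrib)

lemma dotp_diff_right: "dotp x (y - z) = dotp x y - dotp (x :: 'a::field ^ 'n) z"
  unfolding dotp_def by (simp add: algebra_simps sum_subtractf)

lemma dotp_axis_left: "dotp (axis i t) z = t * (z $ i :: 'a::field)"
proof -
  have "(\<Sum>j\<in>UNIV. (if j = i then t else 0) * z $ j) = (\<Sum>j\<in>UNIV. if j = i then t * z $ j else 0)"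
    by (rule sum.cong) auto
  then show ?thesis unfolding dotp_def axis_def by simp
qed

lemma two_neq_zero_if_odd_card:
  assumes "odd CARD('a::{field,finite})"
  shows "(2::'a) \<noteq> 0"
proof
  assume "(2::'a) = 0"
  then have "CHAR('a) dvd 2"
    by (metis of_nat_eq_0_iff_char_dvd of_nat_numeral)
  then have "CHAR('a) = 2"
    using CHAR_not_1 two_is_prime_nat by (metis One_nat_def prime_nat_iff)
  then show False
    using CHAR_dvd_CARD[where 'a='a] assms by simp
qed

lemma card_ge_3_if_odd_card:
  assumes "odd CARD('a::{field,finite})"
  shows "CARD('a) \<ge> 3"
proof -
  have "card {0::'a, 1} \<le> CARD('a)" by (rule card_mono) auto
  then have "CARD('a) \<ge> 2" by simp
  moreover have "CARD('a) \<noteq> 2" using assms by auto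
  ultimately show ?thesis by simp
qed

lemma real_card_filter: "finite A \<Longrightarrow> real (card {x\<in>A. P x}) = (\<Sum>x\<in>A. if P x then 1 else 0)"
  by (simp add: sum.inter_filter[symmetric])

lemma sum_card_fibres:
  fixes g :: "'b \<Rightarrow> 'c::finite"
  assumes "finite F"
  shows "(\<Sum>c\<in>UNIV. real (card {y\<in>F. g y = c})) = real (card F)"
proof -
  have "(\<Sum>c\<in>UNIV. real (card {y\<in>F. g y = c})) = (\<Sum>y\<in>F. \<Sum>c\<in>UNIV. if g y = c then 1 else 0)"
    using assms by (subst sum.swap) (simp add: real_card_filter)
  then show ?thesis by simp
qed

lemma sum_card_fibres_squared:
  fixes g :: "'b \<Rightarrow> 'c::finite"
  assumes "finite F"
  shows "(\<Sum>c\<in>UNIV. real (card {y\<in>F. g y = c}) ^ 2) = (\<Sum>y\<in>F. \<Sum>y'\<in>F. if g y = g y' then 1 else 0)"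
proof -
  have "real (card {y\<in>F. g y = c}) ^ 2 = (\<Sum>y\<in>F. \<Sum>y'\<in>F. if g y = c \<and> g y' = c then 1 else 0)" for c
    using assms by (auto simp: real_card_filter power2_eq_square sum_product intro!: sum.cong)
  then have "(\<Sum>c\<in>UNIV. real (card {y\<in>F. g y = c}) ^ 2)
      = (\<Sum>y\<in>F. \<Sum>y'\<in>F. \<Sum>c\<in>UNIV. if g y = c \<and> g y' = c then 1 else 0)"
    by (simp add: sum.swap[of _ UNIV] sum.swap[of _ UNIV F])
  also have "\<dots> = (\<Sum>y\<in>F. \<Sum>y'\<in>F. if g y = g y' then 1 else 0)"
  proof (intro sum.cong refl)
    fix y y'
    have "(\<Sum>c\<in>UNIV. if g y = c \<and> g y' = c then 1 else 0)
        = (\<Sum>c\<in>UNIV. if g y = c then (if g y = g y' then 1 else 0) else (0::real))"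
      by (intro sum.cong) auto
    then show "(\<Sum>c\<in>UNIV. if g y = c \<and> g y' = c then 1 else 0) = (if g y = g y' then 1 else (0::real))"
      by simp
  qed
  finally show ?thesis .
qed

lemma sum_square_deviation_from_mean:
  fixes n :: "'c \<Rightarrow> real"
  assumes "finite A"
  shows "(\<Sum>c\<in>A. (n c - sum n A / card A) ^ 2) = (\<Sum>c\<in>A. (n c) ^ 2) - (sum n A) ^ 2 / card A"
proof (cases "A = {}")
  case False
  define m where "m = sum n A / card A"
  have "card A > 0" using False assms by (simp add: card_gt_0_iff)
  then have "sum n A = card A * m" by (simp add: m_def)
  then have "(\<Sum>c\<in>A. (n c - m) ^ 2) = (\<Sum>c\<in>A. (n c) ^ 2) - card A * m ^ 2"
    by (simp add: power2_diff sum.distrib sum_subtractf sum_distrib_left[symmetric]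
        sum_distrib_right[symmetric] power2_eq_square algebra_simps)
  then show ?thesis using \<open>card A > 0\<close> by (simp add: m_def power2_eq_square)
qed simp

lemma card_hyperplane:
  fixes d :: "'a::{field,finite} ^ 'n"
  assumes "d \<noteq> 0"
  shows "real (card {x. dotp x d = b}) * real CARD('a) = real CARD('a) ^ CARD('n)"
proof -
  obtain i where di: "d $ i \<noteq> 0" using assms by (metis vec_eq_iff zero_index)
  define H where "H c = {x. dotp x d = c}" for c
  have card_H: "card (H c) = card (H b)" for c
  proof -
    define a where "a = axis i ((c - b) / d $ i)"
    have "dotp a d = c - b" unfolding a_def dotp_axis_left using di by simp
    then have mem: "x + a \<in> H c \<longleftrightarrow> x \<in> H b" for x
      by (auto simp: H_def dotp_add_left)
    have "(\<lambda>x. x + a) ` H b = H c"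
    proof
      show "(\<lambda>x. x + a) ` H b \<subseteq> H c" using mem by auto
      show "H c \<subseteq> (\<lambda>x. x + a) ` H b"
      proof
        fix x assume "x \<in> H c"
        then show "x \<in> (\<lambda>x. x + a) ` H b" using mem[of "x - a"] by (intro image_eqI[of _ _ "x - a"]) auto
      qed
    qed
    then show ?thesis using card_image inj_on_add' by metis
  qed
  have "real CARD('a ^ 'n) = (\<Sum>c\<in>UNIV. real (card (H c)))"
    using sum_card_fibres[of UNIV "\<lambda>x. dotp x d"] by (simp add: H_def)
  also have "\<dots> = (\<Sum>c\<in>(UNIV::'a set). real (card (H b)))"
    by (intro sum.cong refl arg_cong[where f=real] card_H)
  finally show ?thesis by (simp add: H_def)
qed

lemma card_equidistant:
  fixes y y' :: "'a::{field,finite} ^ 'n"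
  assumes "(2::'a) \<noteq> 0" and "y \<noteq> y'"
  shows "real (card {x. sqnorm (x - y) = sqnorm (x - y')}) * real CARD('a) = real CARD('a) ^ CARD('n)"
proof -
  define d where "d = (y' - y) + (y' - y)"
  obtain i where "y $ i \<noteq> y' $ i" using assms(2) by (metis vec_eq_iff)
  then have "d $ i \<noteq> 0" using assms(1) by (simp add: d_def flip: mult_2)
  then have "d \<noteq> 0" by (metis zero_index)
  have "dotp x d = 2 * dotp x y' - 2 * dotp x y" for x
    unfolding d_def dotp_add_right dotp_diff_right by (simp add: algebra_simps)
  then have "sqnorm (x - y) - sqnorm (x - y') = dotp x d - (sqnorm y' - sqnorm y)" for x
    unfolding sqnorm_diff by (simp add: algebra_simps)
  then have "sqnorm (x - y) = sqnorm (x - y') \<longleftrightarrow> dotp x d = sqnorm y' - sqnorm y" for x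
    by (metis eq_iff_diff_eq_0)
  then show ?thesis using card_hyperplane[OF \<open>d \<noteq> 0\<close>] by presburger
qed

definition sphere_count :: "('a::field ^ 'n) set \<Rightarrow> 'a ^ 'n \<Rightarrow> 'a \<Rightarrow> nat" where
  "sphere_count F x t = card {y\<in>F. sqnorm (x - y) = t}"

lemma nu_eq_sum_sphere_count:
  fixes E F :: "('a::{field,finite} ^ 'n) set"
  shows "nu E F t = (\<Sum>x\<in>E. sphere_count F x t)"
proof -
  have "{(x, y). x \<in> E \<and> y \<in> F \<and> sqnorm (x - y) = t} = Sigma E (\<lambda>x. {y\<in>F. sqnorm (x - y) = t})"
    by auto
  then show ?thesis by (simp add: nu_def sphere_count_def card_SigmaI)
qed

lemma sum_sphere_count:
  fixes F :: "('a::{field,finite} ^ 'n) set"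
  shows "(\<Sum>t\<in>UNIV. real (sphere_count F x t)) = real (card F)"
  unfolding sphere_count_def by (rule sum_card_fibres) simp

lemma sum_sq_sphere_count_le:
  fixes F :: "('a::{field,finite} ^ 'n) set"
  assumes "(2::'a) \<noteq> 0"
  defines "q \<equiv> real CARD('a)" and "N \<equiv> real CARD('a) ^ CARD('n)"
  shows "(\<Sum>x\<in>UNIV. \<Sum>t\<in>UNIV. real (sphere_count F x t) ^ 2) \<le> real (card F) ^ 2 * N / q + real (card F) * N"
proof -
  have "(\<Sum>x\<in>UNIV. \<Sum>t\<in>UNIV. real (sphere_count F x t) ^ 2)
      = (\<Sum>x\<in>UNIV. \<Sum>y\<in>F. \<Sum>y'\<in>F. if sqnorm (x - y) = sqnorm (x - y') then 1 else 0)"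
    unfolding sphere_count_def by (intro sum.cong refl sum_card_fibres_squared) simp
  also have "\<dots> = (\<Sum>y\<in>F. \<Sum>y'\<in>F. real (card {x. sqnorm (x - y) = sqnorm (x - y')}))"
    by (simp add: real_card_filter[where A=UNIV, simplified] sum.swap[of _ UNIV])
  also have "\<dots> \<le> (\<Sum>y\<in>F. \<Sum>y'\<in>F. N / q + (if y = y' then N else 0))"
  proof (intro sum_mono)
    fix y y' :: "'a ^ 'n"
    have "q > 0" by (simp add: q_def)
    show "real (card {x. sqnorm (x - y) = sqnorm (x - y')}) \<le> N / q + (if y = y' then N else 0)"
    proof (cases "y = y'")
      case False
      with card_equidistant[OF assms(1) False] \<open>q > 0\<close> show ?thesis
        by (simp add: N_def q_def field_simps)
    qed (use \<open>q > 0\<close> in \<open>simp add: N_def\<close>)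
  qed
  also have "\<dots> = real (card F) ^ 2 * N / q + real (card F) * N"
    by (simp add: sum.distrib sum.delta power2_eq_square algebra_simps)
  finally show ?thesis .
qed

lemma sphere_count_variance_le:
  fixes F :: "('a::{field,finite} ^ 'n) set"
  assumes "(2::'a) \<noteq> 0"
  defines "q \<equiv> real CARD('a)" and "N \<equiv> real CARD('a) ^ CARD('n)"
  shows "(\<Sum>x\<in>UNIV. \<Sum>t\<in>UNIV. (real (sphere_count F x t) - real (card F) / q) ^ 2) \<le> real (card F) * N"
proof -
  have "(\<Sum>t\<in>UNIV. (real (sphere_count F x t) - real (card F) / q) ^ 2)
      = (\<Sum>t\<in>UNIV. real (sphere_count F x t) ^ 2) - real (card F) ^ 2 / q" for x
    using sum_square_deviation_from_mean[of UNIV "\<lambda>t. real (sphere_count F x t)"]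
    by (simp add: sum_sphere_count q_def)
  then have "(\<Sum>x\<in>UNIV. \<Sum>t\<in>UNIV. (real (sphere_count F x t) - real (card F) / q) ^ 2)
      = (\<Sum>x\<in>UNIV. \<Sum>t\<in>UNIV. real (sphere_count F x t) ^ 2) - N * real (card F) ^ 2 / q"
    by (simp add: sum_subtractf N_def)
  then show ?thesis
    using sum_sq_sphere_count_le[OF assms(1), of F] by (simp add: q_def N_def mult_ac)
qed

lemma nu_deviation_sq_le:
  fixes E F :: "('a::{field,finite} ^ 'n) set"
  assumes "(2::'a) \<noteq> 0"
  shows "(real (nu E F t) - real (card E) * real (card F) / real CARD('a)) ^ 2
    \<le> real (card E) * real (card F) * real CARD('a) ^ CARD('n)"
proof -
  define \<delta> where "\<delta> x s = real (sphere_count F x s) - real (card F) / real CARD('a)" for x s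
  have "real (nu E F t) - real (card E) * real (card F) / real CARD('a) = (\<Sum>x\<in>E. \<delta> x t)"
    by (simp add: \<delta>_def nu_eq_sum_sphere_count sum_subtractf)
  then have "(real (nu E F t) - real (card E) * real (card F) / real CARD('a)) ^ 2
      \<le> (\<Sum>x\<in>E. \<delta> x t ^ 2) * real (card E)"
    by (simp add: sum_squared_le_sum_of_squares)
  also have "\<dots> \<le> (\<Sum>x\<in>E. \<Sum>s\<in>UNIV. \<delta> x s ^ 2) * real (card E)"
    by (intro mult_right_mono sum_mono member_le_sum) auto
  also have "\<dots> \<le> (\<Sum>x\<in>UNIV. \<Sum>s\<in>UNIV. \<delta> x s ^ 2) * real (card E)"
    by (intro mult_right_mono sum_mono2) (auto intro: sum_nonneg)
  also have "\<dots> \<le> real (card F) * real CARD('a) ^ CARD('n) * real (card E)"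
    unfolding \<delta>_def by (intro mult_right_mono sphere_count_variance_le[OF assms]) simp
  finally show ?thesis by (simp add: mult_ac)
qed

theorem lemma6:
  fixes E F :: "('a::{field,finite} ^ 'n) set"
  assumes "odd CARD('a)"
    and "CARD('n) \<ge> 2"
    and "real (card E) * real (card F) \<ge> 900 * real CARD('a) ^ CARD('n)"
  shows "real (nu E F 0) \<le> 21 / 30 * real (card E) * real (card F)"
  \<comment> \<open>The argument works in every dimension.\<close>
proof -
  define P where "P = real (card E) * real (card F)"
  define q where "q = real CARD('a)"
  have "P \<ge> 0" by (simp add: P_def)
  have "q \<ge> 3" using card_ge_3_if_odd_card[OF assms(1)] by (simp add: q_def)
  then have "P / q \<le> P / 3"
    using \<open>P \<ge> 0\<close> by (intro divide_left_mono) auto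
  have "(real (nu E F 0) - P / q) ^ 2 \<le> P * q ^ CARD('n)"
    using nu_deviation_sq_le[OF two_neq_zero_if_odd_card[OF assms(1)]] by (simp add: P_def q_def)
  also have "\<dots> \<le> P * (P / 900)"
    using assms(3) \<open>P \<ge> 0\<close> unfolding P_def q_def by (intro mult_left_mono) auto
  also have "\<dots> = (P / 30) ^ 2" by (simp add: power2_eq_square)
  finally have "real (nu E F 0) - P / q \<le> P / 30"
    by (rule power2_le_imp_le) (use \<open>P \<ge> 0\<close> in simp)
  with \<open>P / q \<le> P / 3\<close> \<open>P \<ge> 0\<close> have "real (nu E F 0) \<le> 21 / 30 * P"
    by linarith
  then show ?thesis by (simp add: P_def)
qed

end
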